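(* Let $n\ge1$, let $0<x_1<x_2<\dots<x_{n+1}<1$, and let $A$ be the $(n+1)\times(n+1)$ Bernstein–Vandermonde matrix, $a_{r,c}=\binom{n}{c-1}x_r^{\,c-1}(1-x_r)^{n-c+1}$. Then all pivots of the Neville elimination of $A^T$ are nonzero, and its multipliers $\widetilde m_{i,j}$ satisfy, for $1\le j\le n$ and $j+1\le i\le n+1$, $$\widetilde m_{i,j}=\frac{(n-i+2)\,x_j}{(i-1)(1-x_j)}.$$
   Context: Neville elimination of a nonsingular $N\times N$ matrix $M$: set $M_1=M$ and, for $t=1,\dots,N-1$, obtain $M_{t+1}=(a^{(t+1)}_{i,j})$ from $M_t=(a^{(t)}_{i,j})$ by $a^{(t+1)}_{i,j}=a^{(t)}_{i,j}$ if $i\le t$; $a^{(t+1)}_{i,j}=a^{(t)}_{i,j}-\big(a^{(t)}_{i,t}/a^{(t)}_{i-1,t}\big)a^{(t)}_{i-1,j}$ if $i\ge t+1$ and $j\ge t+1$; and $a^{(t+1)}_{i,j}=0$ otherwise. The pivot $(i,j)$ is $p_{i,j}=a^{(j)}_{i,j}$ for $1\le j\le i\le N$, and the multiplier is $p_{i,j}/p_{i-1,j}$ for $j<i$. Here $\widetilde m_{i,j}$ denotes the multipliers of the Neville elimination applied to $A^T$. *)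

theory Defs
  imports Complex_Main
begin

text \<open>Matrices are functions nat => nat => real, indices 1-based (rows i, columns j in 1..N).\<close>

definition nev_step :: "(nat \<Rightarrow> nat \<Rightarrow> real) \<Rightarrow> nat \<Rightarrow> (nat \<Rightarrow> nat \<Rightarrow> real)" where
  "nev_step M t = (\<lambda>i j. if i \<le> t then M i j
      else if t + 1 \<le> j then M i j - (M i t / M (i - 1) t) * M (i - 1) j
      else 0)"

text \<open>nev_mat M k is the matrix M_(k+1) of the Neville elimination (M_1 = M).\<close>
primrec nev_mat :: "(nat \<Rightarrow> nat \<Rightarrow> real) \<Rightarrow> nat \<Rightarrow> (nat \<Rightarrow> nat \<Rightarrow> real)" where
  "nev_mat M 0 = M"
| "nev_mat M (Suc t) = nev_step (nev_mat M t) (Suc t)"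

text \<open>pivot (i,j) = a^(j)_(i,j), i.e. entry (i,j) of M_j.\<close>
definition nev_pivot :: "(nat \<Rightarrow> nat \<Rightarrow> real) \<Rightarrow> nat \<Rightarrow> nat \<Rightarrow> real" where
  "nev_pivot M i j = nev_mat M (j - 1) i j"

definition nev_mult :: "(nat \<Rightarrow> nat \<Rightarrow> real) \<Rightarrow> nat \<Rightarrow> nat \<Rightarrow> real" where
  "nev_mult M i j = nev_pivot M i j / nev_pivot M (i - 1) j"

definition transp_mat :: "(nat \<Rightarrow> nat \<Rightarrow> real) \<Rightarrow> (nat \<Rightarrow> nat \<Rightarrow> real)" where
  "transp_mat M = (\<lambda>i j. M j i)"

definition bv_mat :: "nat \<Rightarrow> (nat \<Rightarrow> real) \<Rightarrow> (nat \<Rightarrow> nat \<Rightarrow> real)" where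
  "bv_mat n x = (\<lambda>r c. real (n choose (c - 1)) * x r ^ (c - 1) * (1 - x r) ^ (n + 1 - c))"

end

theory Submission
  imports Defs
begin

text \<open>The transpose of the Bernstein-Vandermonde matrix is the row-scaled homogeneous Vandermonde
  matrix \<open>c i * p j ^ (i - 1) * q j ^ (m - i)\<close> with \<open>c i = n choose (i - 1)\<close>, \<open>p = x\<close>, \<open>q = 1 - x\<close>.
  Neville elimination keeps such a matrix in closed form: after \<open>k\<close> steps, column \<open>j\<close> has lost
  \<open>k\<close> factors \<open>p j\<close> and gained \<open>\<Prod>l = 1..k. (p j * q l - p l * q j) / q l\<close>, which is nonzero for
  distinct nodes \<open>(p j : q j)\<close>. Consecutive rows of every stage differ by the factor
  \<open>c i * p j / (c (i - 1) * q j)\<close>, which is therefore the multiplier, and for binomial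
  coefficients \<open>c i / c (i - 1) = (n - i + 2) / (i - 1)\<close>.\<close>

definition hom_vandermonde ::
    "(nat \<Rightarrow> real) \<Rightarrow> (nat \<Rightarrow> real) \<Rightarrow> (nat \<Rightarrow> real) \<Rightarrow> nat \<Rightarrow> nat \<Rightarrow> nat \<Rightarrow> real" where
  "hom_vandermonde c p q m = (\<lambda>i j. c i * p j ^ (i - 1) * q j ^ (m - i))"

locale hom_vandermonde_nodes =
  fixes c p q :: "nat \<Rightarrow> real" and m :: nat
  assumes c_nonzero: "1 \<le> i \<Longrightarrow> i \<le> m \<Longrightarrow> c i \<noteq> 0"
    and p_nonzero: "1 \<le> l \<Longrightarrow> l \<le> m \<Longrightarrow> p l \<noteq> 0"
    and q_nonzero: "1 \<le> l \<Longrightarrow> l \<le> m \<Longrightarrow> q l \<noteq> 0"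
    and nodes_distinct: "1 \<le> l \<Longrightarrow> l < t \<Longrightarrow> t \<le> m \<Longrightarrow> p t * q l \<noteq> p l * q t"
begin

definition stage :: "nat \<Rightarrow> nat \<Rightarrow> nat \<Rightarrow> real" where
  "stage k i j = c i * p j ^ (i - 1 - k) * q j ^ (m - i)
     * (\<Prod>l = 1..k. (p j * q l - p l * q j) / q l)"

lemma stage_0: "stage 0 = hom_vandermonde c p q m"
  by (simp add: fun_eq_iff stage_def hom_vandermonde_def)

lemma stage_row_ratio:
  assumes "k + 1 < i" "i \<le> m" "1 \<le> j" "j \<le> m"
  shows "stage k i j = c i * p j / (c (i - 1) * q j) * stage k (i - 1) j"
proof -
  define W where "W = (\<Prod>l = 1..k. (p j * q l - p l * q j) / q l)"
  define e where "e = i - 1 - 1 - k"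
  have "i - 1 - k = Suc e" "m - (i - 1) = Suc (m - i)"
    using assms(1,2) by (simp_all add: e_def)
  then have upper: "stage k i j = c i * p j ^ Suc e * q j ^ (m - i) * W"
    and lower: "stage k (i - 1) j = c (i - 1) * p j ^ e * q j ^ Suc (m - i) * W"
    unfolding stage_def W_def e_def by simp_all
  have "c (i - 1) \<noteq> 0" "q j \<noteq> 0"
    using c_nonzero q_nonzero assms by simp_all
  then show ?thesis
    unfolding upper lower power_Suc by simp
qed

lemma stage_nonzero:
  assumes "1 \<le> i" "i \<le> m" "k < j" "j \<le> m"
  shows "stage k i j \<noteq> 0"
proof -
  have "(p j * q l - p l * q j) / q l \<noteq> 0" if "l \<in> {1..k}" for l
    using that assms nodes_distinct[of l j] q_nonzero[of l] by auto
  then show ?thesis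
    using assms c_nonzero p_nonzero q_nonzero by (simp add: stage_def)
qed

lemma nev_step_stage:
  assumes "k + 1 < i" "i \<le> m" "k + 1 < j" "j \<le> m"
  shows "nev_step (stage k) (Suc k) i j = stage (Suc k) i j"
proof -
  define r where "r l = c i * p l / (c (i - 1) * q l)" for l
  have row: "stage k i l = r l * stage k (i - 1) l" if "1 \<le> l" "l \<le> m" for l
    unfolding r_def using stage_row_ratio assms that by simp
  have "stage k (i - 1) (Suc k) \<noteq> 0"
    using stage_nonzero assms by simp
  then have "nev_step (stage k) (Suc k) i j = (r j - r (Suc k)) * stage k (i - 1) j"
    using row[of j] row[of "Suc k"] assms by (simp add: nev_step_def algebra_simps)
  also have "\<dots> = stage (Suc k) i j"
  proof -
    define W where "W = (\<Prod>l = 1..k. (p j * q l - p l * q j) / q l)"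
    define e where "e = i - 1 - Suc k"
    have "i - 1 - 1 - k = e" "m - (i - 1) = Suc (m - i)"
      using assms(1,2) by (simp_all add: e_def)
    then have lower: "stage k (i - 1) j = c (i - 1) * p j ^ e * q j ^ Suc (m - i) * W"
      unfolding stage_def W_def by presburger
    have upper: "stage (Suc k) i j
        = c i * p j ^ e * q j ^ (m - i) * (W * ((p j * q (Suc k) - p (Suc k) * q j) / q (Suc k)))"
      by (simp add: stage_def W_def e_def)
    have "c (i - 1) \<noteq> 0" "q j \<noteq> 0" "q (Suc k) \<noteq> 0"
      using c_nonzero q_nonzero assms by simp_all
    then show ?thesis
      unfolding lower upper r_def by (simp add: field_simps)
  qed
  finally show ?thesis .
qed

lemma nev_mat_hom_vandermonde:
  assumes "k < i" "i \<le> m" "k < j" "j \<le> m"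
  shows "nev_mat (hom_vandermonde c p q m) k i j = stage k i j"
  using assms
proof (induction k arbitrary: i j)
  case 0
  then show ?case by (simp add: stage_0)
next
  case (Suc k)
  then have "nev_mat (hom_vandermonde c p q m) (Suc k) i j = nev_step (stage k) (Suc k) i j"
    by (simp add: nev_step_def)
  also have "\<dots> = stage (Suc k) i j"
    using nev_step_stage Suc.prems by simp
  finally show ?case .
qed

lemma nev_pivot_hom_vandermonde:
  assumes "1 \<le> j" "j \<le> i" "i \<le> m"
  shows "nev_pivot (hom_vandermonde c p q m) i j = stage (j - 1) i j"
  using nev_mat_hom_vandermonde assms by (simp add: nev_pivot_def)

lemma nev_pivot_hom_vandermonde_nonzero:
  assumes "1 \<le> j" "j \<le> i" "i \<le> m"
  shows "nev_pivot (hom_vandermonde c p q m) i j \<noteq> 0"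
  using nev_pivot_hom_vandermonde stage_nonzero assms by simp

lemma nev_mult_hom_vandermonde:
  assumes "1 \<le> j" "j < i" "i \<le> m"
  shows "nev_mult (hom_vandermonde c p q m) i j = c i * p j / (c (i - 1) * q j)"
proof -
  have "stage (j - 1) (i - 1) j \<noteq> 0"
    using stage_nonzero assms by simp
  moreover have "stage (j - 1) i j = c i * p j / (c (i - 1) * q j) * stage (j - 1) (i - 1) j"
    using stage_row_ratio assms by simp
  ultimately show ?thesis
    using assms by (simp add: nev_mult_def nev_pivot_hom_vandermonde)
qed

end

lemma binomial_ratio:
  assumes "1 \<le> k" "k \<le> n"
  shows "real (n choose k) / real (n choose (k - 1)) = (real n - real k + 1) / real k"
proof -
  have "k * (n choose k) = (n - (k - 1)) * (n choose (k - 1))"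
    using binomial_absorption[of "k - 1" n] binomial_absorb_comp[of n "k - 1"] assms(1) by simp
  then have "real k * real (n choose k) = real (n - (k - 1)) * real (n choose (k - 1))"
    by (simp only: of_nat_mult[symmetric])
  moreover have "real (n - (k - 1)) = real n - real k + 1"
    using assms by (simp add: of_nat_diff)
  moreover have "real (n choose (k - 1)) \<noteq> 0" "real k \<noteq> 0"
    using assms by simp_all
  ultimately show ?thesis
    by (simp add: frac_eq_eq mult.commute)
qed

lemma transp_bv_mat_eq_hom_vandermonde:
  "transp_mat (bv_mat n x) = hom_vandermonde (\<lambda>i. real (n choose (i - 1))) x (\<lambda>j. 1 - x j) (n + 1)"
  by (simp add: fun_eq_iff transp_mat_def bv_mat_def hom_vandermonde_def)

lemma hom_vandermonde_nodes_bernstein: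
  fixes x :: "nat \<Rightarrow> real"
  assumes "0 < x 1" "\<And>i. 1 \<le> i \<Longrightarrow> i \<le> n \<Longrightarrow> x i < x (i + 1)" "x (n + 1) < 1"
  shows "hom_vandermonde_nodes (\<lambda>i. real (n choose (i - 1))) x (\<lambda>j. 1 - x j) (n + 1)"
proof -
  have increasing: "x l < x t" if "1 \<le> l" "l < t" "t \<le> n + 1" for l t
  proof -
    have "{l..<t} \<subseteq> {1..n}"
      using that by auto
    then show ?thesis
      using lift_Suc_mono_less_ivl[of "{1..n}" x l t] assms(2) that by simp
  qed
  have bounds: "0 < x l \<and> x l < 1" if "1 \<le> l" "l \<le> n + 1" for l
    using increasing[of 1 l] increasing[of l "n + 1"] assms(1,3) that
    by (cases "l = 1"; cases "l = n + 1") auto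
  show ?thesis
  proof
    fix l t assume "1 \<le> l" "l < t" "t \<le> n + 1"
    then have "x t * (1 - x l) - x l * (1 - x t) \<noteq> 0"
      using increasing[of l t] by (simp add: algebra_simps)
    then show "x t * (1 - x l) \<noteq> x l * (1 - x t)"
      by simp
  qed (use bounds in force)+
qed

theorem mainTheorem6:
  fixes n :: nat and x :: "nat \<Rightarrow> real"
  assumes "n \<ge> 1"
    and "0 < x 1"
    and "\<forall>i. 1 \<le> i \<and> i \<le> n \<longrightarrow> x i < x (i + 1)"
    and "x (n + 1) < 1"
  shows "(\<forall>i j. 1 \<le> j \<and> j \<le> i \<and> i \<le> n + 1 \<longrightarrow>
            nev_pivot (transp_mat (bv_mat n x)) i j \<noteq> 0)
       \<and> (\<forall>i j. 1 \<le> j \<and> j \<le> n \<and> j + 1 \<le> i \<and> i \<le> n + 1 \<longrightarrow>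
            nev_mult (transp_mat (bv_mat n x)) i j
              = (real n - real i + 2) * x j / ((real i - 1) * (1 - x j)))"
proof -
  define c where "c i = real (n choose (i - 1))" for i
  interpret hom_vandermonde_nodes c x "\<lambda>j. 1 - x j" "n + 1"
    unfolding c_def using hom_vandermonde_nodes_bernstein assms(2-4) by simp
  have bv: "transp_mat (bv_mat n x) = hom_vandermonde c x (\<lambda>j. 1 - x j) (n + 1)"
    unfolding c_def by (rule transp_bv_mat_eq_hom_vandermonde)
  have "nev_mult (hom_vandermonde c x (\<lambda>j. 1 - x j) (n + 1)) i j
      = (real n - real i + 2) * x j / ((real i - 1) * (1 - x j))"
    if "1 \<le> j" "j < i" "i \<le> n + 1" for i j
  proof -
    have "nev_mult (hom_vandermonde c x (\<lambda>j. 1 - x j) (n + 1)) i j = c i / c (i - 1) * (x j / (1 - x j))"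
      using nev_mult_hom_vandermonde[of j i] that by (simp add: times_divide_times_eq)
    also have "c i / c (i - 1) = (real n - real i + 2) / (real i - 1)"
      using binomial_ratio[of "i - 1" n] that by (simp add: c_def)
    finally show ?thesis
      by (simp add: times_divide_times_eq)
  qed
  then show ?thesis
    unfolding bv using nev_pivot_hom_vandermonde_nonzero by auto
qed

end
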